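(* Let $a,r$ be real numbers with $0<a<a+r<1$ and let $c=b_{\mathbb{D},2}(a,a+r)$. Then \[ \{z:|z-a|<r\}\subset B_{\mathbb{D},2}(a;c)\subset\{z:|z|<a+r\}. \]
   Context: $\mathbb{D}=\{z\in\mathbb{C}:|z|<1\}$. For $z_1,z_2\in\mathbb{D}$, $b_{\mathbb{D},2}(z_1,z_2)=\sup_{z\in\partial\mathbb{D}}\frac{|z_1-z_2|}{\sqrt{|z_1-z|^2+|z-z_2|^2}}$, and $B_{\mathbb{D},2}(a;c)=\{z\in\mathbb{D}: b_{\mathbb{D},2}(a,z)<c\}$. *)

theory Defs
  imports "HOL-Analysis.Analysis"
begin

definition bD2 :: "complex \<Rightarrow> complex \<Rightarrow> real" where
  "bD2 z1 z2 = (SUP z\<in>sphere 0 1. cmod (z1 - z2) / sqrt ((cmod (z1 - z))\<^sup>2 + (cmod (z - z2))\<^sup>2))"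

definition BD2 :: "complex \<Rightarrow> real \<Rightarrow> complex set" where
  "BD2 a c = {z \<in> ball 0 1. bD2 a z < c}"

end

theory Submission
  imports Defs
begin

text \<open>For \<open>w\<close> on the unit circle,
  \<open>|z\<^sub>1 - w|\<^sup>2 + |w - z\<^sub>2|\<^sup>2 = |z\<^sub>1|\<^sup>2 + |z\<^sub>2|\<^sup>2 + 2 - 2 Re ((z\<^sub>1 + z\<^sub>2) w\<^sup>*)\<close>, which is smallest
  for \<open>w = sgn (z\<^sub>1 + z\<^sub>2)\<close>. By the parallelogram law the minimum equals
  \<open>((2 - |z\<^sub>1 + z\<^sub>2|)\<^sup>2 + |z\<^sub>1 - z\<^sub>2|\<^sup>2) / 2\<close>, so \<open>b(z\<^sub>1, z\<^sub>2)\<close> is an increasing function of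
  \<open>|z\<^sub>1 - z\<^sub>2| / (2 - |z\<^sub>1 + z\<^sub>2|)\<close>. For \<open>b = a + r\<close> this ratio is \<open>r / (2 - 2a - r)\<close>, and
  both inclusions reduce to triangle inequalities for \<open>|a - z|\<close> and \<open>|a + z|\<close>.\<close>

lemma sum_sq_dist_expand:
  fixes z1 z2 w :: complex
  shows "(cmod (z1 - w))\<^sup>2 + (cmod (w - z2))\<^sup>2
     = (cmod z1)\<^sup>2 + (cmod z2)\<^sup>2 + 2 * (cmod w)\<^sup>2 - 2 * Re ((z1 + z2) * cnj w)"
  unfolding cmod_power2 by (simp add: power2_eq_square algebra_simps)

lemma parallelogram_cmod:
  fixes z1 z2 :: complex
  shows "(cmod (z1 + z2))\<^sup>2 + (cmod (z1 - z2))\<^sup>2 = 2 * (cmod z1)\<^sup>2 + 2 * (cmod z2)\<^sup>2"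
  unfolding cmod_power2 by (simp add: power2_eq_square algebra_simps)

lemma sum_sq_dist_unit_ge:
  fixes z1 z2 w :: complex
  assumes "cmod w = 1"
  shows "(cmod z1)\<^sup>2 + (cmod z2)\<^sup>2 + 2 - 2 * cmod (z1 + z2)
     \<le> (cmod (z1 - w))\<^sup>2 + (cmod (w - z2))\<^sup>2"
proof -
  have "Re ((z1 + z2) * cnj w) \<le> cmod ((z1 + z2) * cnj w)" by (rule complex_Re_le_cmod)
  also have "\<dots> = cmod (z1 + z2)" using assms by (simp add: norm_mult)
  finally show ?thesis using assms by (simp add: sum_sq_dist_expand)
qed

lemma mult_cnj_sgn: "s * cnj (sgn s) = complex_of_real (cmod s)"
proof (cases "s = 0")
  case False
  have "s * cnj (sgn s) = (s * cnj s) / complex_of_real (cmod s)"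
    by (simp add: sgn_div_norm scaleR_conv_of_real divide_inverse ac_simps)
  also have "\<dots> = complex_of_real ((cmod s)\<^sup>2) / complex_of_real (cmod s)"
    by (simp only: complex_norm_square)
  also have "\<dots> = complex_of_real (cmod s)"
    using False by (simp add: power2_eq_square)
  finally show ?thesis .
qed simp

lemma sum_sq_dist_unit_attained:
  fixes z1 z2 :: complex
  obtains w where "cmod w = 1" and "(cmod (z1 - w))\<^sup>2 + (cmod (w - z2))\<^sup>2
     = (cmod z1)\<^sup>2 + (cmod z2)\<^sup>2 + 2 - 2 * cmod (z1 + z2)"
proof (cases "z1 + z2 = 0")
  case True
  show ?thesis by (rule that[of 1]) (simp_all add: sum_sq_dist_expand True)
next
  case False
  have "Re ((z1 + z2) * cnj (sgn (z1 + z2))) = cmod (z1 + z2)"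
    by (simp only: mult_cnj_sgn Re_complex_of_real)
  with False show ?thesis
    by (intro that[of "sgn (z1 + z2)"]) (simp_all add: sum_sq_dist_expand norm_sgn)
qed

lemma bD2_eq:
  fixes z1 z2 :: complex
  assumes "cmod z1 < 1" "cmod z2 < 1"
  shows "bD2 z1 z2 = cmod (z1 - z2) / sqrt (((2 - cmod (z1 + z2))\<^sup>2 + (cmod (z1 - z2))\<^sup>2) / 2)"
proof -
  define M where "M = (cmod z1)\<^sup>2 + (cmod z2)\<^sup>2 + 2 - 2 * cmod (z1 + z2)"
  have M_eq: "M = ((2 - cmod (z1 + z2))\<^sup>2 + (cmod (z1 - z2))\<^sup>2) / 2"
    using parallelogram_cmod[of z1 z2] unfolding M_def by (simp add: power2_eq_square algebra_simps)
  have "cmod (z1 + z2) < 2"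
    using norm_triangle_ineq[of z1 z2] assms by linarith
  hence "M > 0" unfolding M_eq by (simp add: add_pos_nonneg)
  obtain w0 where w0: "cmod w0 = 1" "(cmod (z1 - w0))\<^sup>2 + (cmod (w0 - z2))\<^sup>2 = M"
    using sum_sq_dist_unit_attained[of z1 z2] unfolding M_def by blast
  have "bD2 z1 z2 = cmod (z1 - z2) / sqrt M"
    unfolding bD2_def
  proof (rule cSup_eq_maximum)
    show "cmod (z1 - z2) / sqrt M
        \<in> (\<lambda>z. cmod (z1 - z2) / sqrt ((cmod (z1 - z))\<^sup>2 + (cmod (z - z2))\<^sup>2)) ` sphere 0 1"
      using w0 by (intro image_eqI[of _ _ w0]) auto
  next
    fix x
    assume "x \<in> (\<lambda>z. cmod (z1 - z2) / sqrt ((cmod (z1 - z))\<^sup>2 + (cmod (z - z2))\<^sup>2)) ` sphere 0 1"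
    then obtain w where w: "cmod w = 1"
      and x: "x = cmod (z1 - z2) / sqrt ((cmod (z1 - w))\<^sup>2 + (cmod (w - z2))\<^sup>2)"
      by auto
    have "sqrt M \<le> sqrt ((cmod (z1 - w))\<^sup>2 + (cmod (w - z2))\<^sup>2)"
      using sum_sq_dist_unit_ge[OF w] unfolding M_def by simp
    with \<open>M > 0\<close> show "x \<le> cmod (z1 - z2) / sqrt M"
      unfolding x by (intro divide_left_mono) auto
  qed
  thus ?thesis unfolding M_eq .
qed

lemma div_sqrt_mean_sq_less_iff:
  fixes D D' P P' :: real
  assumes "D \<ge> 0" "D' \<ge> 0" "P > 0" "P' > 0"
  shows "D / sqrt ((P\<^sup>2 + D\<^sup>2) / 2) < D' / sqrt ((P'\<^sup>2 + D'\<^sup>2) / 2) \<longleftrightarrow> D * P' < D' * P"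
proof -
  have pos: "P\<^sup>2 + D\<^sup>2 > 0" "P'\<^sup>2 + D'\<^sup>2 > 0" using assms by (simp_all add: add_pos_nonneg)
  have sq: "(x / sqrt ((y\<^sup>2 + x\<^sup>2) / 2))\<^sup>2 = 2 * x\<^sup>2 / (y\<^sup>2 + x\<^sup>2)" if "y > 0" for x y :: real
    using that by (simp add: power_divide add_pos_nonneg)
  have less_iff_sq: "x < y \<longleftrightarrow> x\<^sup>2 < y\<^sup>2" if "0 \<le> x" "0 \<le> y" for x y :: real
    using that by (meson power_less_imp_less_base power_strict_mono zero_less_numeral)
  have "D / sqrt ((P\<^sup>2 + D\<^sup>2) / 2) < D' / sqrt ((P'\<^sup>2 + D'\<^sup>2) / 2)
      \<longleftrightarrow> (D / sqrt ((P\<^sup>2 + D\<^sup>2) / 2))\<^sup>2 < (D' / sqrt ((P'\<^sup>2 + D'\<^sup>2) / 2))\<^sup>2"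
    using assms by (intro less_iff_sq) simp_all
  also have "\<dots> \<longleftrightarrow> 2 * D\<^sup>2 / (P\<^sup>2 + D\<^sup>2) < 2 * D'\<^sup>2 / (P'\<^sup>2 + D'\<^sup>2)"
    using assms by (simp only: sq)
  also have "\<dots> \<longleftrightarrow> D\<^sup>2 * (P'\<^sup>2 + D'\<^sup>2) < D'\<^sup>2 * (P\<^sup>2 + D\<^sup>2)"
    using pos by (simp add: divide_less_eq less_divide_eq field_simps)
  also have "\<dots> \<longleftrightarrow> (D * P')\<^sup>2 < (D' * P)\<^sup>2"
    by (simp add: power2_eq_square algebra_simps)
  also have "\<dots> \<longleftrightarrow> D * P' < D' * P"
    using assms by (intro less_iff_sq[symmetric]) simp_all
  finally show ?thesis .
qed

lemma bD2_less_iff: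
  fixes z w u :: complex
  assumes "cmod z < 1" "cmod w < 1" "cmod u < 1"
  shows "bD2 z w < bD2 z u
     \<longleftrightarrow> cmod (z - w) * (2 - cmod (z + u)) < cmod (z - u) * (2 - cmod (z + w))"
proof -
  have "cmod (z + v) < 2" if "cmod v < 1" for v
    using norm_triangle_ineq[of z v] assms(1) that by linarith
  with assms have "2 - cmod (z + w) > 0" "2 - cmod (z + u) > 0" by auto
  then show ?thesis
    unfolding bD2_eq[OF assms(1,2)] bD2_eq[OF assms(1,3)]
    by (intro div_sqrt_mean_sq_less_iff) simp_all
qed

context
  fixes a r :: real
  assumes a_pos: "0 < a" and r_pos: "0 < r" and ar_lt1: "a + r < 1"
begin

lemma bD2_less_iff_real:
  fixes z :: complex
  assumes "cmod z < 1"
  shows "bD2 a z < bD2 a (a + r)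
     \<longleftrightarrow> cmod (a - z) * (2 - 2 * a - r) < r * (2 - cmod (a + z))"
proof -
  have dist: "cmod (complex_of_real a - complex_of_real (a + r)) = r"
    using r_pos by (simp flip: of_real_diff)
  have sum: "cmod (complex_of_real a + complex_of_real (a + r)) = 2 * a + r"
    using a_pos r_pos by (simp flip: of_real_add)
  have "cmod (complex_of_real a) < 1" "cmod (complex_of_real (a + r)) < 1"
    using a_pos r_pos ar_lt1 by (simp_all del: of_real_add)
  from bD2_less_iff[OF this(1) assms this(2)] show ?thesis
    unfolding dist sum diff_diff_eq .
qed

lemma ball_subset_BD2: "ball (complex_of_real a) r \<subseteq> BD2 a (bD2 a (a + r))"
proof
  fix z
  assume "z \<in> ball (complex_of_real a) r"
  hence d: "cmod (a - z) < r" by (simp add: dist_norm)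
  have "cmod z \<le> cmod (complex_of_real a) + cmod (a - z)"
    using norm_triangle_ineq4[of a "a - z"] by simp
  hence z1: "cmod z < 1" using d a_pos ar_lt1 by simp
  have "cmod (a + z) \<le> cmod (2 * complex_of_real a) + cmod (a - z)"
    using norm_triangle_ineq4[of "2 * complex_of_real a" "a - z"] by (simp add: algebra_simps)
  hence sum_lt: "cmod (a + z) < 2 * a + r" using d a_pos by (simp add: norm_mult)
  have "cmod (a - z) * (2 - 2 * a - r) < r * (2 - 2 * a - r)"
    using d r_pos ar_lt1 by (intro mult_strict_right_mono) auto
  also have "\<dots> < r * (2 - cmod (a + z))"
    using sum_lt r_pos by (intro mult_strict_left_mono) auto
  finally have "cmod (a - z) * (2 - 2 * a - r) < r * (2 - cmod (a + z))" .
  thus "z \<in> BD2 a (bD2 a (a + r))"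
    using z1 bD2_less_iff_real[OF z1] unfolding BD2_def by simp
qed

lemma BD2_subset_ball: "BD2 a (bD2 a (a + r)) \<subseteq> ball 0 (a + r)"
proof
  fix z
  assume "z \<in> BD2 a (bD2 a (a + r))"
  hence z1: "cmod z < 1" and "bD2 a z < bD2 a (a + r)" unfolding BD2_def by auto
  hence less: "cmod (a - z) * (2 - 2 * a - r) < r * (2 - cmod (a + z))"
    using bD2_less_iff_real[OF z1] by simp
  have diff_ge: "cmod (a - z) \<ge> cmod z - a"
    using norm_triangle_ineq2[of z a] a_pos by (simp add: norm_minus_commute)
  have sum_ge: "2 * cmod z \<le> cmod (a + z) + cmod (a - z)"
    using norm_triangle_ineq4[of "a + z" "a - z"] by (simp add: norm_mult)
  show "z \<in> ball 0 (a + r)"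
  proof (rule ccontr)
    assume "z \<notin> ball 0 (a + r)"
    hence "cmod z \<ge> a + r" by simp
    have "cmod (a - z) * (2 - 2 * a - 2 * r) \<ge> (cmod z - a) * (2 - 2 * a - 2 * r)"
      using diff_ge ar_lt1 by (intro mult_right_mono) auto
    moreover have "r * (cmod (a + z) + cmod (a - z)) \<ge> r * (2 * cmod z)"
      using sum_ge r_pos by (intro mult_left_mono) auto
    moreover have "(cmod z - (a + r)) * (2 - 2 * a) \<ge> 0"
      using \<open>cmod z \<ge> a + r\<close> r_pos ar_lt1 by (intro mult_nonneg_nonneg) auto
    \<comment> \<open>the sum of the first two is \<open>(|z| - a - r)(2 - 2a) \<le> |a - z|(2 - 2a - r) - r(2 - |a + z|)\<close>\<close>
    ultimately show False
      using less by (simp add: algebra_simps)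
  qed
qed

end

theorem theorem3p16:
  fixes a r c :: real
  assumes "0 < a" and "a < a + r" and "a + r < 1"
    and "c = bD2 (complex_of_real a) (complex_of_real (a + r))"
  shows "ball (complex_of_real a) r \<subseteq> BD2 (complex_of_real a) c
       \<and> BD2 (complex_of_real a) c \<subseteq> ball 0 (a + r)"
  using ball_subset_BD2[of a r] BD2_subset_ball[of a r] assms by simp

end
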